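(* Let $\lambda>0$, $L\ge1$, and let $\Sigma\in\mathbb{R}^{d\times d}$ be symmetric positive definite with simple spectrum $\sigma_1>\cdots>\sigma_d>0$ and unit eigenvectors $u_1,\dots,u_d$. Define, with $a=\mu^\top\Sigma\mu$ and $b=\mu^\top\Sigma^2\mu$, \[ \mathcal{R}_{\mathrm{lin},L}(\mu)=\operatorname{tr}(\Sigma)-\tfrac{2\lambda}{L}\operatorname{tr}(\Sigma)a-\tfrac{2\lambda(L+1)}{L}b+\tfrac{\lambda^2(L+2)}{L^2}\operatorname{tr}(\Sigma)a^2+\tfrac{\lambda^2(L+2)(L+3)}{L^2}ab. \] For $i=1,\dots,d$ let $\mu_i^\pm=\pm\gamma_i^\star u_i$ with $\gamma_i^\star=\sqrt{\frac{\operatorname{tr}(\Sigma)+(L+1)\sigma_i}{\frac{\lambda}{L}\sigma_i(L+2)(\operatorname{tr}(\Sigma)+(L+3)\sigma_i)}}$. Then $\mathrm{crit}(\mathcal{R}_{\mathrm{lin},L})=\{0\}\cup\{\mu_i^\pm:i=1,\dots,d\}$; $\nabla^2\mathcal{R}_{\mathrm{lin},L}(0)$ is negative definite, so $0$ is a local maximum; and $\nabla^2\mathcal{R}_{\mathrm{lin},L}(\mu_i^\pm)$ is diagonal in the eigenbasis of $\Sigma$, with eigenvalue along $u_j$ equal to $8\frac{\lambda}{L}\sigma_i(\operatorname{tr}(\Sigma)+(L+1)\sigma_i)$ if $j=i$, and $2\frac{\lambda}{L}\sigma_j(\sigma_i-\sigma_j)\frac{(L-1)\operatorname{tr}(\Sigma)+(L+1)(L+3)\sigma_i}{\operatorname{tr}(\Sigma)+(L+3)\sigma_i}$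 if $j\ne i$. In particular $\nabla^2\mathcal{R}_{\mathrm{lin},L}(\mu_1^\pm)$ is positive definite, and for $i>1$ $\nabla^2\mathcal{R}_{\mathrm{lin},L}(\mu_i^\pm)$ has both positive and negative eigenvalues. Consequently $\mu_1^\pm=\pm\gamma_1^\star u_1$ are global minimizers of $\mathcal{R}_{\mathrm{lin},L}$, and $\mu_i^\pm$ is a strict saddle for every $i>1$.
   Context: $\mathcal{R}_{\mathrm{lin},L}(\mu)$ equals $\mathbb{E}\|X_1-\frac{\lambda}{L}\sum_{k=1}^L(X_1^\top\mu\mu^\top X_k)X_k\|^2$ for $X_1,\dots,X_L$ i.i.d. $\mathcal{N}(0,\Sigma)$ (a linear attention risk). *)

theory Defs
  imports "HOL-Analysis.Analysis"
begin

definition R_lin :: "real \<Rightarrow> nat \<Rightarrow> real^'n^'n \<Rightarrow> real^'n \<Rightarrow> real" where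
  "R_lin lam L S mu =
     (let a = mu \<bullet> (S *v mu); b = mu \<bullet> ((S ** S) *v mu); t = trace S; l = real L in
       t - 2 * lam / l * t * a - 2 * lam * (l + 1) / l * b
         + lam^2 * (l + 2) / l^2 * t * a^2
         + lam^2 * (l + 2) * (l + 3) / l^2 * a * b)"

definition crit :: "('a::real_normed_vector \<Rightarrow> real) \<Rightarrow> 'a set" where
  "crit f = {x. (f has_derivative (\<lambda>_. 0)) (at x)}"

definition is_hessian :: "(real^'n \<Rightarrow> real) \<Rightarrow> real^'n^'n \<Rightarrow> real^'n \<Rightarrow> bool" where
  "is_hessian f H x \<longleftrightarrow>
     (\<exists>G. (\<forall>y. (f has_derivative (\<lambda>h. G y \<bullet> h)) (at y)) \<and>
          (G has_derivative (\<lambda>h. H *v h)) (at x))"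

definition pos_def :: "real^'n^'n \<Rightarrow> bool" where
  "pos_def A \<longleftrightarrow> (\<forall>v. v \<noteq> 0 \<longrightarrow> v \<bullet> (A *v v) > 0)"

definition neg_def :: "real^'n^'n \<Rightarrow> bool" where
  "neg_def A \<longleftrightarrow> (\<forall>v. v \<noteq> 0 \<longrightarrow> v \<bullet> (A *v v) < 0)"

definition has_eigenvalue :: "real^'n^'n \<Rightarrow> real \<Rightarrow> bool" where
  "has_eigenvalue A c \<longleftrightarrow> (\<exists>v. v \<noteq> 0 \<and> A *v v = c *\<^sub>R v)"

definition local_max :: "(real^'n \<Rightarrow> real) \<Rightarrow> real^'n \<Rightarrow> bool" where
  "local_max f x \<longleftrightarrow> (\<exists>e>0. \<forall>y\<in>ball x e. f y \<le> f x)"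

definition global_min :: "(real^'n \<Rightarrow> real) \<Rightarrow> real^'n \<Rightarrow> bool" where
  "global_min f x \<longleftrightarrow> (\<forall>y. f x \<le> f y)"

definition strict_saddle :: "(real^'n \<Rightarrow> real) \<Rightarrow> real^'n \<Rightarrow> bool" where
  "strict_saddle f x \<longleftrightarrow> x \<in> crit f \<and> (\<exists>H. is_hessian f H x \<and> (\<exists>c<0. has_eigenvalue H c))"

end

theory Submission
  imports Defs
begin

text \<open>Write a = mu' S mu and b = mu' S^2 mu, so that R_lin is a quadratic polynomial
  F(a, b) = t - p a - q b + r a^2 + w a b with positive coefficients satisfying the coupling
  inequality p w \<le> 2 q r (for linear attention it reads L + 3 \<le> 2 (L + 1)). The gradient is
  2 F_a S mu + 2 F_b S^2 mu. At a nonzero critical point the coupling inequality rules out F_b = 0,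
  so mu is an eigenvector of S, hence a multiple of some u_i by simplicity of the spectrum, and
  the multiple is fixed by one scalar equation. The Hessian there is diagonal in the eigenbasis,
  with the sign of the entry along u_j being that of sigma_i - sigma_j for j \<noteq> i. For the global
  minimum, b \<le> sigma_1 a, and on the cone 0 \<le> b \<le> sigma_1 a the coupling inequality pushes the
  minimum of F onto the edge b = sigma_1 a, where F is a convex quadratic in a minimised exactly
  at the critical points along u_1.\<close>

lemmas has_derivative_matrix_vector_mult [derivative_intros] =
  bounded_linear.has_derivative[OF matrix_vector_mul_bounded_linear]

lemma inner_matrix_vector_symmetric:
  fixes A :: "real^'n^'n"
  assumes "transpose A = A"
  shows "x \<bullet> (A *v y) = (A *v x) \<bullet> y"
  by (metis assms dot_lmul_matrix vector_transpose_matrix)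

lemma transpose_square_symmetric:
  fixes A :: "real^'n^'n"
  assumes "transpose A = A"
  shows "transpose (A ** A) = A ** A"
  by (metis assms matrix_transpose_mul)

definition quad_form :: "real^'n^'n \<Rightarrow> real^'n \<Rightarrow> real" where
  "quad_form A x = x \<bullet> (A *v x)"

lemma has_derivative_quad_form:
  fixes A :: "real^'n^'n"
  assumes "transpose A = A"
  shows "(quad_form A has_derivative (\<lambda>h. (2 *\<^sub>R (A *v x)) \<bullet> h)) (at x)"
  unfolding quad_form_def[abs_def]
  by (rule derivative_eq_intros refl)+
    (use inner_matrix_vector_symmetric[OF assms] in \<open>auto simp: inner_commute algebra_simps fun_eq_iff\<close>)

lemma quad_form_square_eq_inner:
  fixes A :: "real^'n^'n"
  assumes "transpose A = A"
  shows "quad_form (A ** A) x = (A *v x) \<bullet> (A *v x)"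
  unfolding quad_form_def
  using inner_matrix_vector_symmetric[OF assms, of x "A *v x"]
  by (simp add: matrix_vector_mul_assoc)

lemma gradient_unique:
  fixes f :: "'a::real_inner \<Rightarrow> real"
  assumes "(f has_derivative (\<lambda>h. g \<bullet> h)) (at x)"
    and "(f has_derivative (\<lambda>h. g' \<bullet> h)) (at x)"
  shows "g = g'"
proof -
  have "(\<lambda>h. g \<bullet> h) = (\<lambda>h. g' \<bullet> h)"
    using has_derivative_unique[OF assms] .
  then have "(g - g') \<bullet> (g - g') = 0"
    by (metis inner_diff_left right_minus_eq)
  then show ?thesis by simp
qed

lemma crit_iff_gradient_eq_0:
  fixes f :: "'a::real_inner \<Rightarrow> real"
  assumes "(f has_derivative (\<lambda>h. g \<bullet> h)) (at x)"
  shows "x \<in> crit f \<longleftrightarrow> g = 0"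
  using gradient_unique[OF assms, of 0] assms unfolding crit_def by auto

lemma is_hessian_apply:
  assumes "\<And>y. (f has_derivative (\<lambda>h. g y \<bullet> h)) (at y)" and "(g has_derivative D) (at x)"
    and "is_hessian f H x"
  shows "H *v v = D v"
proof -
  obtain G where G: "\<And>y. (f has_derivative (\<lambda>h. G y \<bullet> h)) (at y)"
    and GH: "(G has_derivative (\<lambda>h. H *v h)) (at x)"
    using assms(3) unfolding is_hessian_def by blast
  have "G = g"
    using gradient_unique[OF G assms(1)] by auto
  then have "(\<lambda>h. H *v h) = D"
    using has_derivative_unique[OF _ assms(2)] GH by simp
  then show ?thesis by metis
qed

lemma is_hessian_matrix:
  assumes "\<And>y. (f has_derivative (\<lambda>h. g y \<bullet> h)) (at y)" and "(g has_derivative D) (at x)"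
  shows "is_hessian f (matrix D) x"
proof -
  have "linear D"
    using assms(2) by (simp add: has_derivative_linear)
  then have "(\<lambda>h. matrix D *v h) = D"
    by (simp add: matrix_works fun_eq_iff)
  then show ?thesis
    unfolding is_hessian_def using assms by metis
qed

lemma trace_pos_if_pos_def:
  fixes S :: "real^'n^'n"
  assumes "pos_def S"
  shows "trace S > 0"
proof -
  have "S $ k $ k > 0" for k
  proof -
    have "axis k 1 \<bullet> (S *v axis k (1::real)) > 0"
      using assms unfolding pos_def_def by (metis axis_eq_0_iff zero_neq_one)
    then show ?thesis by (simp add: inner_axis' matrix_vector_mult_basis column_def)
  qed
  then show ?thesis unfolding trace_def by (simp add: sum_pos)
qed

locale orthonormal_family =
  fixes u :: "nat \<Rightarrow> real^'n"
  assumes norm_u: "\<And>i. i \<in> {1..CARD('n)} \<Longrightarrow> norm (u i) = 1"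
    and orthogonal_u:
      "\<And>i j. i \<in> {1..CARD('n)} \<Longrightarrow> j \<in> {1..CARD('n)} \<Longrightarrow> i \<noteq> j \<Longrightarrow> u i \<bullet> u j = 0"
begin

lemma inner_u_u:
  "i \<in> {1..CARD('n)} \<Longrightarrow> j \<in> {1..CARD('n)} \<Longrightarrow> u i \<bullet> u j = (if i = j then 1 else 0)"
  using norm_u orthogonal_u by (auto simp: norm_eq_sqrt_inner)

lemma u_nonzero: "i \<in> {1..CARD('n)} \<Longrightarrow> u i \<noteq> 0"
  using norm_u by fastforce

lemma span_u: "span (u ` {1..CARD('n)}) = UNIV"
proof -
  have "inj_on u {1..CARD('n)}"
  proof (rule inj_onI)
    fix i j assume "i \<in> {1..CARD('n)}" "j \<in> {1..CARD('n)}" "u i = u j"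
    then show "i = j" using inner_u_u[of i j] inner_u_u[of j j] by (auto split: if_splits)
  qed
  then have card: "card (u ` {1..CARD('n)}) = CARD('n)"
    by (simp add: card_image)
  have independent: "independent (u ` {1..CARD('n)})"
    by (rule pairwise_orthogonal_independent)
      (auto simp: pairwise_def orthogonal_def u_nonzero intro: orthogonal_u)
  have "UNIV \<subseteq> span (u ` {1..CARD('n)})"
    using card_ge_dim_independent[OF _ independent, of UNIV] card by simp
  then show ?thesis by auto
qed

lemma eq_0_if_coords_eq_0:
  assumes "\<And>j. j \<in> {1..CARD('n)} \<Longrightarrow> x \<bullet> u j = 0"
  shows "x = 0"
proof -
  have "orthogonal x x"
    by (rule orthogonal_to_span[of _ "u ` {1..CARD('n)}"])
      (use span_u assms in \<open>auto simp: orthogonal_def\<close>)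
  then show ?thesis by (simp add: orthogonal_def)
qed

lemma exists_coord_nonzero: "x \<noteq> 0 \<Longrightarrow> \<exists>j\<in>{1..CARD('n)}. x \<bullet> u j \<noteq> 0"
  using eq_0_if_coords_eq_0 by blast

lemma coord_sum_u:
  "k \<in> {1..CARD('n)} \<Longrightarrow> (\<Sum>j\<in>{1..CARD('n)}. c j *\<^sub>R u j) \<bullet> u k = c k"
  by (simp add: inner_sum_left inner_u_u if_distrib cong: if_cong)

lemma expansion_u: "x = (\<Sum>j\<in>{1..CARD('n)}. (x \<bullet> u j) *\<^sub>R u j)"
proof -
  have "(x - (\<Sum>j\<in>{1..CARD('n)}. (x \<bullet> u j) *\<^sub>R u j)) \<bullet> u k = 0"
    if "k \<in> {1..CARD('n)}" for k
    using coord_sum_u[OF that] by (simp add: inner_diff_left)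
  then have "x - (\<Sum>j\<in>{1..CARD('n)}. (x \<bullet> u j) *\<^sub>R u j) = 0"
    by (rule eq_0_if_coords_eq_0)
  then show ?thesis by simp
qed

lemma parseval_u: "x \<bullet> y = (\<Sum>j\<in>{1..CARD('n)}. (x \<bullet> u j) * (y \<bullet> u j))"
proof -
  have "x \<bullet> y = x \<bullet> (\<Sum>j\<in>{1..CARD('n)}. (y \<bullet> u j) *\<^sub>R u j)"
    using expansion_u[of y] by simp
  then show ?thesis by (simp add: inner_sum_right mult.commute)
qed

lemma pos_def_if_eigen_u:
  fixes H :: "real^'n^'n"
  assumes eigen: "\<And>j. j \<in> {1..CARD('n)} \<Longrightarrow> H *v u j = e j *\<^sub>R u j"
    and pos: "\<And>j. j \<in> {1..CARD('n)} \<Longrightarrow> e j > 0"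
  shows "pos_def H"
  unfolding pos_def_def
proof (intro allI impI)
  fix v :: "real^'n"
  assume "v \<noteq> 0"
  then obtain i where i: "i \<in> {1..CARD('n)}" "v \<bullet> u i \<noteq> 0"
    using exists_coord_nonzero by blast
  have "H *v v = (\<Sum>j\<in>{1..CARD('n)}. (v \<bullet> u j * e j) *\<^sub>R u j)"
    by (subst expansion_u[of v])
      (simp add: linear_sum[OF matrix_vector_mul_linear] matrix_vector_mult_scaleR eigen)
  then have "v \<bullet> (H *v v) = (\<Sum>j\<in>{1..CARD('n)}. e j * (v \<bullet> u j)\<^sup>2)"
    by (simp add: inner_sum_right power2_eq_square mult_ac)
  also have "\<dots> > 0"
    using i pos[OF i(1)] pos by (intro sum_pos2[OF _ i(1)]) (simp_all add: less_imp_le)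
  finally show "v \<bullet> (H *v v) > 0" .
qed

end

locale orthonormal_eigenbasis = orthonormal_family u for u :: "nat \<Rightarrow> real^'n" +
  fixes S :: "real^'n^'n" and sigma :: "nat \<Rightarrow> real"
  assumes symmetric: "transpose S = S"
    and eigen: "\<And>i. i \<in> {1..CARD('n)} \<Longrightarrow> S *v u i = sigma i *\<^sub>R u i"
begin

lemma eigen_square: "j \<in> {1..CARD('n)} \<Longrightarrow> (S ** S) *v u j = (sigma j)\<^sup>2 *\<^sub>R u j"
  by (simp add: matrix_vector_mul_assoc[symmetric] eigen matrix_vector_mult_scaleR power2_eq_square)

lemma coord_S: "j \<in> {1..CARD('n)} \<Longrightarrow> (S *v x) \<bullet> u j = sigma j * (x \<bullet> u j)"
  using inner_matrix_vector_symmetric[OF symmetric, of x "u j"] eigen by simp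

lemma coord_S_square:
  "j \<in> {1..CARD('n)} \<Longrightarrow> ((S ** S) *v x) \<bullet> u j = (sigma j)\<^sup>2 * (x \<bullet> u j)"
  using inner_matrix_vector_symmetric[OF transpose_square_symmetric[OF symmetric], of x "u j"]
  by (simp add: eigen_square)

lemma quad_form_S_eq_sum: "quad_form S x = (\<Sum>j\<in>{1..CARD('n)}. sigma j * (x \<bullet> u j)\<^sup>2)"
  unfolding quad_form_def parseval_u[of x "S *v x"]
  by (rule sum.cong) (auto simp: coord_S power2_eq_square)

lemma quad_form_S_square_eq_sum:
  "quad_form (S ** S) x = (\<Sum>j\<in>{1..CARD('n)}. (sigma j)\<^sup>2 * (x \<bullet> u j)\<^sup>2)"
  unfolding quad_form_def parseval_u[of x "(S ** S) *v x"]
  by (rule sum.cong) (auto simp: coord_S_square power2_eq_square)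

lemma quad_form_S_scaled_u: "i \<in> {1..CARD('n)} \<Longrightarrow> quad_form S (c *\<^sub>R u i) = c\<^sup>2 * sigma i"
  by (simp add: quad_form_def matrix_vector_mult_scaleR eigen inner_u_u power2_eq_square)

lemma quad_form_S_square_scaled_u:
  "i \<in> {1..CARD('n)} \<Longrightarrow> quad_form (S ** S) (c *\<^sub>R u i) = c\<^sup>2 * (sigma i)\<^sup>2"
  by (simp add: quad_form_def matrix_vector_mult_scaleR eigen_square inner_u_u power2_eq_square)

lemma eigenvector_eq_scaled_u:
  assumes simple: "inj_on sigma {1..CARD('n)}" and "S *v x = k *\<^sub>R x" and "x \<noteq> 0"
  shows "\<exists>i\<in>{1..CARD('n)}. x = (x \<bullet> u i) *\<^sub>R u i"
proof -
  obtain i where i: "i \<in> {1..CARD('n)}" "x \<bullet> u i \<noteq> 0"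
    using exists_coord_nonzero[OF \<open>x \<noteq> 0\<close>] by blast
  have coord: "sigma j * (x \<bullet> u j) = k * (x \<bullet> u j)" if "j \<in> {1..CARD('n)}" for j
    using coord_S[OF that, of x] \<open>S *v x = k *\<^sub>R x\<close> by auto
  have "k = sigma i"
    using coord[OF i(1)] i(2) by simp
  have "(x - (x \<bullet> u i) *\<^sub>R u i) \<bullet> u j = 0" if j: "j \<in> {1..CARD('n)}" for j
  proof (cases "j = i")
    case False
    then have "sigma j \<noteq> sigma i"
      using simple i(1) j by (auto dest: inj_onD)
    then have "x \<bullet> u j = 0"
      using coord[OF j] \<open>k = sigma i\<close> by simp
    then show ?thesis
      using False i(1) j by (simp add: inner_diff_left inner_u_u)
  qed (simp add: inner_diff_left inner_u_u[OF i(1) i(1)])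
  then have "x - (x \<bullet> u i) *\<^sub>R u i = 0"
    by (rule eq_0_if_coords_eq_0)
  then show ?thesis
    using i(1) by auto
qed

end

locale quartic_risk = orthonormal_eigenbasis u S sigma
  for u :: "nat \<Rightarrow> real^'n" and S sigma +
  fixes t p q r w :: real
  assumes sigma_pos: "\<And>i. i \<in> {1..CARD('n)} \<Longrightarrow> sigma i > 0"
    and p_pos: "p > 0" and q_pos: "q > 0" and r_pos: "r > 0" and w_pos: "w > 0"
    and coupling: "p * w \<le> 2 * q * r"
begin

definition risk_poly :: "real \<Rightarrow> real \<Rightarrow> real" where
  "risk_poly a b = t - p * a - q * b + r * a\<^sup>2 + w * a * b"

definition risk :: "real^'n \<Rightarrow> real" where
  "risk x = risk_poly (quad_form S x) (quad_form (S ** S) x)"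

definition grad :: "real^'n \<Rightarrow> real^'n" where
  "grad x = (2 * (2 * r * quad_form S x + w * quad_form (S ** S) x - p)) *\<^sub>R (S *v x)
     + (2 * (w * quad_form S x - q)) *\<^sub>R ((S ** S) *v x)"

definition hess :: "real^'n \<Rightarrow> real^'n \<Rightarrow> real^'n" where
  "hess x h = (4 * (2 * r * ((S *v x) \<bullet> h) + w * (((S ** S) *v x) \<bullet> h))) *\<^sub>R (S *v x)
     + (4 * w * ((S *v x) \<bullet> h)) *\<^sub>R ((S ** S) *v x)
     + (2 * (2 * r * quad_form S x + w * quad_form (S ** S) x - p)) *\<^sub>R (S *v h)
     + (2 * (w * quad_form S x - q)) *\<^sub>R ((S ** S) *v h)"

lemma has_derivative_risk: "(risk has_derivative (\<lambda>h. grad x \<bullet> h)) (at x)"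
  unfolding risk_def[abs_def] risk_poly_def
  by (rule derivative_eq_intros has_derivative_quad_form symmetric
      transpose_square_symmetric refl)+
    (auto simp: grad_def fun_eq_iff algebra_simps power2_eq_square)

lemma has_derivative_grad: "(grad has_derivative hess x) (at x)"
  unfolding grad_def[abs_def]
  by (rule derivative_eq_intros has_derivative_quad_form symmetric
      transpose_square_symmetric refl)+
    (auto simp: hess_def fun_eq_iff algebra_simps)

lemma S_eq_0_iff: "S *v x = 0 \<longleftrightarrow> x = 0"
proof
  assume "S *v x = 0"
  then have "x \<bullet> u j = 0" if "j \<in> {1..CARD('n)}" for j
    using coord_S[OF that, of x] sigma_pos[OF that] by simp
  then show "x = 0"
    by (rule eq_0_if_coords_eq_0)
qed simp

lemma quad_form_S_pos: "x \<noteq> 0 \<Longrightarrow> quad_form S x > 0"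
proof -
  assume "x \<noteq> 0"
  then obtain i where i: "i \<in> {1..CARD('n)}" "x \<bullet> u i \<noteq> 0"
    using exists_coord_nonzero by blast
  show "quad_form S x > 0"
    unfolding quad_form_S_eq_sum
    using i sigma_pos by (intro sum_pos2[OF _ i(1)]) (simp_all add: less_imp_le)
qed

lemma quad_form_S_nonneg: "quad_form S x \<ge> 0"
  using quad_form_S_pos[of x] by (cases "x = 0") (auto simp: quad_form_def)

lemma quad_form_S_square_nonneg: "quad_form (S ** S) x \<ge> 0"
  unfolding quad_form_square_eq_inner[OF symmetric] by simp

definition crit_radius :: "nat \<Rightarrow> real" where
  "crit_radius i = sqrt ((p + q * sigma i) / (2 * sigma i * (r + w * sigma i)))"

lemma sigma_denominators_pos:
  assumes "i \<in> {1..CARD('n)}"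
  shows "r + w * sigma i > 0" and "2 * sigma i * (r + w * sigma i) > 0"
  using sigma_pos[OF assms] r_pos w_pos by (simp_all add: add_pos_pos)

lemma crit_radius_square:
  assumes "i \<in> {1..CARD('n)}"
  shows "(crit_radius i)\<^sup>2 = (p + q * sigma i) / (2 * sigma i * (r + w * sigma i))"
proof -
  have "p + q * sigma i > 0"
    using sigma_pos[OF assms] p_pos q_pos by (simp add: add_pos_pos)
  then show ?thesis
    unfolding crit_radius_def using sigma_denominators_pos(2)[OF assms] by simp
qed

lemma grad_scaled_u:
  assumes "i \<in> {1..CARD('n)}"
  shows "grad (c *\<^sub>R u i) =
    (2 * c * sigma i * (2 * c\<^sup>2 * sigma i * (r + w * sigma i) - (p + q * sigma i))) *\<^sub>R u i"
  unfolding grad_def quad_form_S_scaled_u[OF assms] quad_form_S_square_scaled_u[OF assms]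
  by (simp add: eigen[OF assms] eigen_square[OF assms]
      algebra_simps power2_eq_square flip: scaleR_add_left)

lemma grad_scaled_u_eq_0_iff:
  assumes "i \<in> {1..CARD('n)}"
  shows "grad (c *\<^sub>R u i) = 0 \<longleftrightarrow> c = 0 \<or> c = crit_radius i \<or> c = - crit_radius i"
proof -
  have "2 * c\<^sup>2 * sigma i * (r + w * sigma i) - (p + q * sigma i) = 0 \<longleftrightarrow>
      c\<^sup>2 * (2 * sigma i * (r + w * sigma i)) = p + q * sigma i"
    by (simp add: algebra_simps)
  also have "\<dots> \<longleftrightarrow> c\<^sup>2 = (crit_radius i)\<^sup>2"
    unfolding crit_radius_square[OF assms] using sigma_denominators_pos(2)[OF assms]
    by (simp only: nonzero_eq_divide_eq[OF less_imp_neq[symmetric]])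
  also have "\<dots> \<longleftrightarrow> c = crit_radius i \<or> c = - crit_radius i"
    by (rule power2_eq_iff)
  finally show ?thesis
    unfolding grad_scaled_u[OF assms] using sigma_pos[OF assms] u_nonzero[OF assms] by auto
qed

text \<open>If the coefficient B of S^2 x in the gradient vanished, so would the coefficient A of S x,
  but the coupling condition makes w A = 2 q r - p w + w^2 |S x|^2 positive.\<close>
lemma eigenvector_if_grad_eq_0:
  assumes "grad x = 0" and "x \<noteq> 0"
  shows "\<exists>k. S *v x = k *\<^sub>R x"
proof -
  define A where "A = 2 * r * quad_form S x + w * quad_form (S ** S) x - p"
  define B where "B = w * quad_form S x - q"
  have "grad x = 2 *\<^sub>R (S *v (A *\<^sub>R x + B *\<^sub>R (S *v x)))"
    unfolding grad_def A_def B_def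
    by (simp add: matrix_vector_right_distrib matrix_vector_mult_scaleR matrix_vector_mul_assoc
        scaleR_add_right)
  then have AB: "A *\<^sub>R x + B *\<^sub>R (S *v x) = 0"
    using assms(1) S_eq_0_iff by simp
  have "B \<noteq> 0"
  proof
    assume "B = 0"
    then have "A = 0"
      using AB assms(2) by simp
    have "quad_form (S ** S) x > 0"
      unfolding quad_form_square_eq_inner[OF symmetric] using S_eq_0_iff assms(2) by simp
    then have "0 < (2 * q * r - p * w) + w * w * quad_form (S ** S) x"
      using coupling w_pos by (simp add: add_nonneg_pos)
    also have "\<dots> = w * A"
      using \<open>B = 0\<close> unfolding A_def B_def by (simp add: algebra_simps)
    finally show False
      using \<open>A = 0\<close> by simp
  qed
  have "S *v x = (1 / B) *\<^sub>R (B *\<^sub>R (S *v x))"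
    using \<open>B \<noteq> 0\<close> by simp
  also have "B *\<^sub>R (S *v x) = - (A *\<^sub>R x)"
    using AB by (simp add: eq_neg_iff_add_eq_0 add.commute)
  also have "(1 / B) *\<^sub>R - (A *\<^sub>R x) = (- A / B) *\<^sub>R x"
    by simp
  finally show ?thesis ..
qed

lemma grad_crit_u_eq_0:
  "i \<in> {1..CARD('n)} \<Longrightarrow> s \<in> {-1, 1} \<Longrightarrow> grad ((s * crit_radius i) *\<^sub>R u i) = 0"
  using grad_scaled_u_eq_0_iff[of i "s * crit_radius i"] by auto

lemma grad_eq_0_cases:
  assumes simple: "inj_on sigma {1..CARD('n)}" and "grad x = 0"
  shows "x = 0 \<or>
    (\<exists>s i. x = (s * crit_radius i) *\<^sub>R u i \<and> s \<in> {-1, 1} \<and> i \<in> {1..CARD('n)})"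
proof (cases "x = 0")
  case False
  then obtain i where i: "i \<in> {1..CARD('n)}" and "x = (x \<bullet> u i) *\<^sub>R u i"
    using eigenvector_eq_scaled_u[OF simple] eigenvector_if_grad_eq_0[OF \<open>grad x = 0\<close>] by blast
  then obtain c where x: "x = c *\<^sub>R u i" and "c \<noteq> 0"
    using False by (metis scale_zero_left)
  moreover have "grad (c *\<^sub>R u i) = 0"
    using \<open>grad x = 0\<close> x by simp
  ultimately have "c = crit_radius i \<or> c = - crit_radius i"
    using grad_scaled_u_eq_0_iff[OF i] by simp
  then have "x = (1 * crit_radius i) *\<^sub>R u i \<or> x = (-1 * crit_radius i) *\<^sub>R u i"
    using x by auto
  then show ?thesis
    using i by blast
qed simp

lemma crit_risk:
  assumes "inj_on sigma {1..CARD('n)}"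
  shows "crit risk =
    {0} \<union> {(s * crit_radius i) *\<^sub>R u i | s i. s \<in> {-1, 1} \<and> i \<in> {1..CARD('n)}}"
  using crit_iff_gradient_eq_0[OF has_derivative_risk] grad_eq_0_cases[OF assms] grad_crit_u_eq_0
  by (auto simp: grad_def)

definition hess_eigval :: "nat \<Rightarrow> nat \<Rightarrow> real" where
  "hess_eigval i j = (if j = i then 4 * sigma i * (p + q * sigma i)
     else sigma j * (sigma i - sigma j) * (2 * q * r - p * w + q * w * sigma i) / (r + w * sigma i))"

lemma hess_scaled_u:
  assumes i: "i \<in> {1..CARD('n)}" and j: "j \<in> {1..CARD('n)}"
  shows "hess (c *\<^sub>R u i) (u j) =
    ((if j = i then 8 * c\<^sup>2 * (sigma i)\<^sup>2 * (r + w * sigma i) else 0)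
     + 2 * sigma j * (2 * r * c\<^sup>2 * sigma i + w * c\<^sup>2 * (sigma i)\<^sup>2 - p
        + (w * c\<^sup>2 * sigma i - q) * sigma j)) *\<^sub>R u j"
  unfolding hess_def quad_form_S_scaled_u[OF i] quad_form_S_square_scaled_u[OF i]
  by (cases "j = i")
    (simp_all add: eigen[OF i] eigen_square[OF i] eigen[OF j] eigen_square[OF j] inner_u_u[OF i j] inner_u_u[OF i i]
      algebra_simps power2_eq_square flip: scaleR_add_left)

lemma hess_eigval_eq:
  assumes i: "i \<in> {1..CARD('n)}" and g: "g * (2 * sigma i * (r + w * sigma i)) = p + q * sigma i"
  shows "(if j = i then 8 * g * (sigma i)\<^sup>2 * (r + w * sigma i) else 0)
     + 2 * sigma j * (2 * r * g * sigma i + w * g * (sigma i)\<^sup>2 - p + (w * g * sigma i - q) * sigma j)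
     = hess_eigval i j"
proof (cases "j = i")
  case True
  have "8 * g * (sigma i)\<^sup>2 * (r + w * sigma i)
      + 2 * sigma i * (2 * r * g * sigma i + w * g * (sigma i)\<^sup>2 - p + (w * g * sigma i - q) * sigma i)
    = 4 * sigma i * (g * (2 * sigma i * (r + w * sigma i)))
      + 2 * sigma i * (g * (2 * sigma i * (r + w * sigma i)) - (p + q * sigma i))"
    by (simp add: algebra_simps power2_eq_square)
  then show ?thesis
    unfolding g by (simp add: hess_eigval_def True)
next
  case False
  have "(q - w * g * sigma i) * (2 * (r + w * sigma i))
      = 2 * q * (r + w * sigma i) - w * (g * (2 * sigma i * (r + w * sigma i)))"
    by (simp add: algebra_simps)
  also have "\<dots> = 2 * q * r - p * w + q * w * sigma i"
    unfolding g by (simp add: algebra_simps)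
  finally have q_minus: "q - w * g * sigma i = (2 * q * r - p * w + q * w * sigma i) / (2 * (r + w * sigma i))"
    using sigma_denominators_pos(1)[OF i] by (simp add: eq_divide_eq)
  have "2 * sigma j * (2 * r * g * sigma i + w * g * (sigma i)\<^sup>2 - p + (w * g * sigma i - q) * sigma j)
    = 2 * sigma j * ((g * (2 * sigma i * (r + w * sigma i)) - (p + q * sigma i))
        + (sigma i - sigma j) * (q - w * g * sigma i))"
    by (simp add: algebra_simps power2_eq_square)
  also have "\<dots> = hess_eigval i j"
    unfolding g q_minus hess_eigval_def using False sigma_denominators_pos(1)[OF i]
    by (simp add: field_simps)
  finally show ?thesis
    using False by simp
qed

lemma hess_crit_u:
  assumes i: "i \<in> {1..CARD('n)}" and j: "j \<in> {1..CARD('n)}" and s: "s \<in> {-1, 1}"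
  shows "hess ((s * crit_radius i) *\<^sub>R u i) (u j) = hess_eigval i j *\<^sub>R u j"
proof -
  have g: "(s * crit_radius i)\<^sup>2 * (2 * sigma i * (r + w * sigma i)) = p + q * sigma i"
    using s crit_radius_square[OF i] sigma_denominators_pos(2)[OF i] by (auto simp: power_mult_distrib)
  show ?thesis
    unfolding hess_scaled_u[OF i j] hess_eigval_eq[OF i g] ..
qed

lemma hessian_crit_u:
  assumes "i \<in> {1..CARD('n)}" and "j \<in> {1..CARD('n)}" and "s \<in> {-1, 1}"
    and "is_hessian risk H ((s * crit_radius i) *\<^sub>R u i)"
  shows "H *v u j = hess_eigval i j *\<^sub>R u j"
  using is_hessian_apply[OF has_derivative_risk has_derivative_grad assms(4)] hess_crit_u[OF assms(1-3)]
  by simp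

lemma is_hessian_risk: "is_hessian risk (matrix (hess x)) x"
  by (rule is_hessian_matrix[OF has_derivative_risk has_derivative_grad])

lemma hessian_0_neg_def:
  assumes "is_hessian risk H 0"
  shows "neg_def H"
  unfolding neg_def_def
proof (intro allI impI)
  fix v :: "real^'n"
  assume "v \<noteq> 0"
  have "v \<bullet> (H *v v) = v \<bullet> hess 0 v"
    using is_hessian_apply[OF has_derivative_risk has_derivative_grad assms] by simp
  also have "\<dots> = - 2 * p * quad_form S v - 2 * q * quad_form (S ** S) v"
    by (simp add: hess_def quad_form_def algebra_simps)
  also have "\<dots> < 0"
    using mult_pos_pos[OF p_pos quad_form_S_pos[OF \<open>v \<noteq> 0\<close>]]
      mult_nonneg_nonneg[OF less_imp_le[OF q_pos] quad_form_S_square_nonneg[of v]]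
    by linarith
  finally show "v \<bullet> (H *v v) < 0" .
qed

lemma local_max_0: "local_max risk 0"
proof -
  define phi where "phi y = r * quad_form S y + w * quad_form (S ** S) y" for y
  have "continuous_on UNIV phi"
    unfolding phi_def
    using has_derivative_continuous[OF has_derivative_quad_form[OF symmetric]]
      has_derivative_continuous[OF has_derivative_quad_form[OF transpose_square_symmetric[OF symmetric]]]
    by (intro continuous_intros continuous_at_imp_continuous_on) auto
  then have "open {y. phi y < p}"
    by (rule open_Collect_less[OF _ continuous_on_const])
  moreover have "phi 0 < p"
    using p_pos by (simp add: phi_def quad_form_def)
  ultimately obtain e where "e > 0" and e: "ball 0 e \<subseteq> {y. phi y < p}"
    unfolding open_contains_ball by blast
  have "risk y \<le> risk 0" if "y \<in> ball 0 e" for y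
  proof -
    have "risk y - risk 0 = quad_form S y * (phi y - p) - q * quad_form (S ** S) y"
      by (simp add: risk_def risk_poly_def phi_def quad_form_def algebra_simps power2_eq_square)
    also have "\<dots> \<le> 0"
      using e that mult_nonneg_nonpos[OF quad_form_S_nonneg[of y], of "phi y - p"]
        mult_nonneg_nonneg[OF less_imp_le[OF q_pos] quad_form_S_square_nonneg[of y]]
      by auto
    finally show ?thesis by simp
  qed
  then show ?thesis
    unfolding local_max_def using \<open>e > 0\<close> by blast
qed

lemma hess_eigval_diag_pos: "i \<in> {1..CARD('n)} \<Longrightarrow> hess_eigval i i > 0"
  using sigma_pos p_pos q_pos by (simp add: hess_eigval_def add_pos_pos)

lemma hess_eigval_off_diag_sign:
  assumes i: "i \<in> {1..CARD('n)}" and j: "j \<in> {1..CARD('n)}"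
  shows "sigma j < sigma i \<Longrightarrow> hess_eigval i j > 0"
    and "sigma i < sigma j \<Longrightarrow> hess_eigval i j < 0"
proof -
  define F where "F = (2 * q * r - p * w + q * w * sigma i) / (r + w * sigma i)"
  have "2 * q * r - p * w + q * w * sigma i > 0"
    using coupling sigma_pos[OF i] q_pos w_pos by (simp add: add_nonneg_pos)
  then have "F > 0"
    unfolding F_def using sigma_denominators_pos(1)[OF i] by simp
  moreover have "hess_eigval i j = sigma j * (sigma i - sigma j) * F" if "sigma i \<noteq> sigma j"
    using that by (auto simp: hess_eigval_def F_def)
  ultimately show "sigma j < sigma i \<Longrightarrow> hess_eigval i j > 0"
    and "sigma i < sigma j \<Longrightarrow> hess_eigval i j < 0"
    using sigma_pos[OF j] by (simp_all add: mult_pos_neg mult_neg_pos)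
qed

lemma has_eigenvalue_hessian_crit_u:
  assumes "i \<in> {1..CARD('n)}" and "j \<in> {1..CARD('n)}" and "s \<in> {-1, 1}"
    and "is_hessian risk H ((s * crit_radius i) *\<^sub>R u i)"
  shows "has_eigenvalue H (hess_eigval i j)"
  unfolding has_eigenvalue_def using hessian_crit_u[OF assms] u_nonzero[OF assms(2)] by blast

lemma pos_def_hessian_crit_u:
  assumes i: "i \<in> {1..CARD('n)}"
    and top: "\<And>j. j \<in> {1..CARD('n)} \<Longrightarrow> j \<noteq> i \<Longrightarrow> sigma j < sigma i"
    and "s \<in> {-1, 1}" and H: "is_hessian risk H ((s * crit_radius i) *\<^sub>R u i)"
  shows "pos_def H"
proof (rule pos_def_if_eigen_u)
  fix j
  assume j: "j \<in> {1..CARD('n)}"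
  show "H *v u j = hess_eigval i j *\<^sub>R u j"
    by (rule hessian_crit_u[OF i j \<open>s \<in> {-1, 1}\<close> H])
  show "hess_eigval i j > 0"
    using hess_eigval_diag_pos[OF i] hess_eigval_off_diag_sign(1)[OF i j top[OF j]] by (cases "j = i") auto
qed

lemma indefinite_hessian_crit_u:
  assumes i: "i \<in> {1..CARD('n)}" and j: "j \<in> {1..CARD('n)}" and "sigma i < sigma j"
    and s: "s \<in> {-1, 1}" and H: "is_hessian risk H ((s * crit_radius i) *\<^sub>R u i)"
  shows "(\<exists>c>0. has_eigenvalue H c) \<and> (\<exists>c<0. has_eigenvalue H c)"
  using has_eigenvalue_hessian_crit_u[OF i i s H] hess_eigval_diag_pos[OF i]
    has_eigenvalue_hessian_crit_u[OF i j s H] hess_eigval_off_diag_sign(2)[OF i j \<open>sigma i < sigma j\<close>]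
  by blast

lemma strict_saddle_crit_u:
  assumes "i \<in> {1..CARD('n)}" and "j \<in> {1..CARD('n)}" and "sigma i < sigma j" and "s \<in> {-1, 1}"
  shows "strict_saddle risk ((s * crit_radius i) *\<^sub>R u i)"
  unfolding strict_saddle_def
  using grad_crit_u_eq_0[OF assms(1,4)] crit_iff_gradient_eq_0[OF has_derivative_risk]
    is_hessian_risk indefinite_hessian_crit_u[OF assms(1-4)]
  by blast

text \<open>If w a \<le> q, raising b to k a does not increase the polynomial. Otherwise dropping
  the b-terms and then lowering a to q / w does not increase it either (this is where the coupling
  condition enters), and at a = q / w the b-terms vanish identically.\<close>
lemma risk_poly_cone_min:
  assumes "k > 0" and "a \<ge> 0" and "b \<ge> 0" and "b \<le> k * a"
  defines "a\<^sub>0 \<equiv> (p + q * k) / (2 * (r + w * k))"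
  shows "risk_poly a\<^sub>0 (k * a\<^sub>0) \<le> risk_poly a b"
proof -
  have rwk: "r + w * k > 0"
    using r_pos w_pos \<open>k > 0\<close> by (simp add: add_pos_pos)
  have edge_min: "risk_poly a\<^sub>0 (k * a\<^sub>0) \<le> risk_poly x (k * x)" for x
  proof -
    have "risk_poly x (k * x) - risk_poly a\<^sub>0 (k * a\<^sub>0)
        = (r + w * k) * (x - a\<^sub>0)\<^sup>2 + (x - a\<^sub>0) * (2 * (r + w * k) * a\<^sub>0 - (p + q * k))"
      by (simp add: risk_poly_def algebra_simps power2_eq_square)
    also have "2 * (r + w * k) * a\<^sub>0 = p + q * k"
      using rwk unfolding a\<^sub>0_def by simp
    finally have "risk_poly x (k * x) - risk_poly a\<^sub>0 (k * a\<^sub>0) = (r + w * k) * (x - a\<^sub>0)\<^sup>2"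
      by simp
    moreover have "(r + w * k) * (x - a\<^sub>0)\<^sup>2 \<ge> 0"
      using rwk by simp
    ultimately show ?thesis
      by linarith
  qed
  show ?thesis
  proof (cases "w * a \<le> q")
    case True
    have "(k * a - b) * (q - w * a) \<ge> 0"
      using True \<open>b \<le> k * a\<close> by simp
    then have "risk_poly a (k * a) \<le> risk_poly a b"
      by (simp add: risk_poly_def algebra_simps power2_eq_square)
    then show ?thesis
      using edge_min[of a] by simp
  next
    case False
    define y where "y = q / w"
    have "w * y = q"
      using w_pos by (simp add: y_def)
    have "y < a"
      using False w_pos by (simp add: y_def pos_divide_less_eq mult.commute)
    have "b * (w * a - q) \<ge> 0"
      using False \<open>b \<ge> 0\<close> by simp
    then have "risk_poly a 0 \<le> risk_poly a b"
      by (simp add: risk_poly_def algebra_simps)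
    moreover have "p \<le> r * (a + y)"
    proof -
      have "p * w \<le> 2 * r * (w * y)"
        using coupling \<open>w * y = q\<close> by (simp add: mult_ac)
      then have "p \<le> 2 * r * y"
        using w_pos by (simp add: mult_ac)
      moreover have "r * (a - y) > 0"
        using \<open>y < a\<close> r_pos by simp
      ultimately show ?thesis
        by (simp add: algebra_simps)
    qed
    then have "(a - y) * (r * (a + y) - p) \<ge> 0"
      using \<open>y < a\<close> by simp
    then have "risk_poly y 0 \<le> risk_poly a 0"
      by (simp add: risk_poly_def algebra_simps power2_eq_square)
    moreover have "risk_poly y (k * y) = risk_poly y 0"
      using \<open>w * y = q\<close> by (simp add: risk_poly_def algebra_simps)
    ultimately show ?thesis
      using edge_min[of y] by linarith
  qed
qed

lemma global_min_crit_u: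
  assumes i: "i \<in> {1..CARD('n)}" and top: "\<And>j. j \<in> {1..CARD('n)} \<Longrightarrow> sigma j \<le> sigma i"
    and "s \<in> {-1, 1}"
  shows "global_min risk ((s * crit_radius i) *\<^sub>R u i)"
  unfolding global_min_def
proof
  fix y
  define a\<^sub>0 where "a\<^sub>0 = (p + q * sigma i) / (2 * (r + w * sigma i))"
  have a: "(s * crit_radius i)\<^sup>2 * sigma i = a\<^sub>0"
    using \<open>s \<in> {-1, 1}\<close> crit_radius_square[OF i] sigma_pos[OF i]
    by (auto simp: a\<^sub>0_def power_mult_distrib)
  then have b: "(s * crit_radius i)\<^sup>2 * (sigma i)\<^sup>2 = sigma i * a\<^sub>0"
    by (metis mult.commute mult.left_commute power2_eq_square)
  have "risk ((s * crit_radius i) *\<^sub>R u i) = risk_poly a\<^sub>0 (sigma i * a\<^sub>0)"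
    unfolding risk_def quad_form_S_scaled_u[OF i] quad_form_S_square_scaled_u[OF i] a b ..
  also have "\<dots> \<le> risk y"
    unfolding risk_def a\<^sub>0_def
  proof (rule risk_poly_cone_min[OF sigma_pos[OF i] quad_form_S_nonneg quad_form_S_square_nonneg])
    show "quad_form (S ** S) y \<le> sigma i * quad_form S y"
      unfolding quad_form_S_eq_sum quad_form_S_square_eq_sum sum_distrib_left
    proof (rule sum_mono)
      fix j
      assume j: "j \<in> {1..CARD('n)}"
      have "(sigma j)\<^sup>2 \<le> sigma i * sigma j"
        using top[OF j] sigma_pos[OF j] by (simp add: power2_eq_square mult_right_mono)
      then show "(sigma j)\<^sup>2 * (y \<bullet> u j)\<^sup>2 \<le> sigma i * (sigma j * (y \<bullet> u j)\<^sup>2)"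
        by (metis mult.assoc mult_right_mono zero_le_power2)
    qed
  qed
  finally show "risk ((s * crit_radius i) *\<^sub>R u i) \<le> risk y" .
qed

end

locale linear_attention = orthonormal_eigenbasis u S sigma
  for u :: "nat \<Rightarrow> real^'n" and S sigma +
  fixes lam :: real and L :: nat
  assumes lam_pos: "lam > 0" and L_ge_1: "L \<ge> 1" and pos_def_S: "pos_def S"
begin

lemma sigma_pos_if_pos_def: "i \<in> {1..CARD('n)} \<Longrightarrow> sigma i > 0"
  using pos_def_S u_nonzero[of i] inner_u_u[of i i]
  by (fastforce simp: pos_def_def eigen)

lemma attention_coupling: "2 * lam / real L * trace S * (lam\<^sup>2 * (real L + 2) * (real L + 3) / (real L)\<^sup>2)
    \<le> 2 * (2 * lam * (real L + 1) / real L) * (lam\<^sup>2 * (real L + 2) / (real L)\<^sup>2 * trace S)"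
proof -
  have "2 * lam ^ 3 * (real L + 2) * trace S / real L ^ 3 \<ge> 0"
    using lam_pos trace_pos_if_pos_def[OF pos_def_S] by simp
  moreover have "real L + 3 \<le> 2 * (real L + 1)"
    using L_ge_1 by simp
  ultimately have "2 * lam ^ 3 * (real L + 2) * trace S / real L ^ 3 * (real L + 3)
      \<le> 2 * lam ^ 3 * (real L + 2) * trace S / real L ^ 3 * (2 * (real L + 1))"
    by (metis mult_left_mono)
  then show ?thesis
    using L_ge_1 by (simp add: field_simps power2_eq_square power3_eq_cube)
qed

end

sublocale linear_attention \<subseteq> quartic_risk u S sigma "trace S" "2 * lam / real L * trace S"
  "2 * lam * (real L + 1) / real L" "lam\<^sup>2 * (real L + 2) / (real L)\<^sup>2 * trace S"
  "lam\<^sup>2 * (real L + 2) * (real L + 3) / (real L)\<^sup>2"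
  using sigma_pos_if_pos_def lam_pos L_ge_1 trace_pos_if_pos_def[OF pos_def_S] attention_coupling
  by unfold_locales auto

context linear_attention
begin

lemma R_lin_eq_risk: "R_lin lam L S = risk"
  unfolding R_lin_def risk_def risk_poly_def quad_form_def Let_def fun_eq_iff
  by (simp add: algebra_simps)

lemma crit_radius_attention:
  "crit_radius = (\<lambda>i. sqrt ((trace S + (real L + 1) * sigma i) /
     (lam / real L * sigma i * (real L + 2) * (trace S + (real L + 3) * sigma i))))"
proof -
  define k where "k = 2 * lam / real L"
  have "k \<noteq> 0"
    using lam_pos L_ge_1 by (simp add: k_def)
  have num: "2 * lam / real L * trace S + 2 * lam * (real L + 1) / real L * z
      = k * (trace S + (real L + 1) * z)"
    and den: "2 * z * (lam\<^sup>2 * (real L + 2) / (real L)\<^sup>2 * trace S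
        + lam\<^sup>2 * (real L + 2) * (real L + 3) / (real L)\<^sup>2 * z)
      = k * (lam / real L * z * (real L + 2) * (trace S + (real L + 3) * z))"
    for z
    unfolding k_def using L_ge_1 by (simp_all add: field_simps power2_eq_square)
  show ?thesis
    unfolding crit_radius_def num den mult_divide_mult_cancel_left[OF \<open>k \<noteq> 0\<close>] ..
qed

lemma hess_eigval_attention:
  "hess_eigval = (\<lambda>i j. if j = i then 8 * (lam / real L) * sigma i * (trace S + (real L + 1) * sigma i)
     else 2 * (lam / real L) * sigma j * (sigma i - sigma j) *
       (((real L - 1) * trace S + (real L + 1) * (real L + 3) * sigma i) /
        (trace S + (real L + 3) * sigma i)))"
proof -
  define m where "m = lam\<^sup>2 * (real L + 2) / (real L)\<^sup>2"
  have "m \<noteq> 0"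
    using lam_pos L_ge_1 by (simp add: m_def)
  have diag: "4 * z * (2 * lam / real L * trace S + 2 * lam * (real L + 1) / real L * z)
      = 8 * (lam / real L) * z * (trace S + (real L + 1) * z)"
    and num: "y * (2 * (2 * lam * (real L + 1) / real L) * (lam\<^sup>2 * (real L + 2) / (real L)\<^sup>2 * trace S)
        - 2 * lam / real L * trace S * (lam\<^sup>2 * (real L + 2) * (real L + 3) / (real L)\<^sup>2)
        + 2 * lam * (real L + 1) / real L * (lam\<^sup>2 * (real L + 2) * (real L + 3) / (real L)\<^sup>2) * z)
      = m * (2 * (lam / real L) * y * ((real L - 1) * trace S + (real L + 1) * (real L + 3) * z))"
    and den: "lam\<^sup>2 * (real L + 2) / (real L)\<^sup>2 * trace S
        + lam\<^sup>2 * (real L + 2) * (real L + 3) / (real L)\<^sup>2 * z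
      = m * (trace S + (real L + 3) * z)"
    for y z
    unfolding m_def using L_ge_1 by (simp_all add: field_simps power2_eq_square)
  show ?thesis
    unfolding hess_eigval_def diag num den
      mult_divide_mult_cancel_left[OF \<open>m \<noteq> 0\<close>]
    using \<open>m \<noteq> 0\<close> by (simp add: fun_eq_iff)
qed

end

theorem proposition15:
  fixes lam :: real and L :: nat and S :: "real^'n^'n"
    and sigma :: "nat \<Rightarrow> real" and u :: "nat \<Rightarrow> real^'n"
  defines "d \<equiv> CARD('n)"
  defines "R \<equiv> R_lin lam L S"
  defines "gamma \<equiv> (\<lambda>i. sqrt ((trace S + (real L + 1) * sigma i) /
              (lam / real L * sigma i * (real L + 2) * (trace S + (real L + 3) * sigma i))))"
  defines "hev \<equiv> (\<lambda>i j. if j = i then 8 * (lam / real L) * sigma i * (trace S + (real L + 1) * sigma i)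
              else 2 * (lam / real L) * sigma j * (sigma i - sigma j) *
                   (((real L - 1) * trace S + (real L + 1) * (real L + 3) * sigma i) /
                    (trace S + (real L + 3) * sigma i)))"
  assumes lam: "lam > 0" and L: "L \<ge> 1"
    and sym: "transpose S = S" and pd: "pos_def S"
    and eig: "\<And>i. i \<in> {1..d} \<Longrightarrow> S *v u i = sigma i *\<^sub>R u i"
    and unit: "\<And>i. i \<in> {1..d} \<Longrightarrow> norm (u i) = 1"
    and orth: "\<And>i j. i \<in> {1..d} \<Longrightarrow> j \<in> {1..d} \<Longrightarrow> i \<noteq> j \<Longrightarrow> u i \<bullet> u j = 0"
    and decr: "\<And>i j. i \<in> {1..d} \<Longrightarrow> j \<in> {1..d} \<Longrightarrow> i < j \<Longrightarrow> sigma i > sigma j"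
    and spos: "sigma d > 0"
  shows "(crit R = {0} \<union> {((s::real) * gamma i) *\<^sub>R u i | s i. s \<in> {-1, 1} \<and> i \<in> {1..d}})
    \<and> (\<forall>x. \<exists>H. is_hessian R H x)
    \<and> (\<forall>H. is_hessian R H 0 \<longrightarrow> neg_def H)
    \<and> (local_max R 0)
    \<and> (\<forall>i\<in>{1..d}. \<forall>s::real\<in>{-1, 1}. \<forall>H. is_hessian R H ((s * gamma i) *\<^sub>R u i) \<longrightarrow>
           (\<forall>j\<in>{1..d}. H *v u j = hev i j *\<^sub>R u j))
    \<and> (\<forall>s::real\<in>{-1, 1}. \<forall>H. is_hessian R H ((s * gamma 1) *\<^sub>R u 1) \<longrightarrow> pos_def H)
    \<and> (\<forall>i\<in>{2..d}. \<forall>s::real\<in>{-1, 1}. \<forall>H. is_hessian R H ((s * gamma i) *\<^sub>R u i) \<longrightarrow>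
           (\<exists>c>0. has_eigenvalue H c) \<and> (\<exists>c<0. has_eigenvalue H c))
    \<and> (\<forall>s::real\<in>{-1, 1}. global_min R ((s * gamma 1) *\<^sub>R u 1))
    \<and> (\<forall>i\<in>{2..d}. \<forall>s::real\<in>{-1, 1}. strict_saddle R ((s * gamma i) *\<^sub>R u i))"
proof -
  interpret linear_attention u S sigma lam L
    using unit orth sym eig lam L pd by unfold_locales (auto simp: d_def)
  have R: "R = risk" and gamma: "gamma = crit_radius" and hev: "hev = hess_eigval"
    unfolding R_def gamma_def hev_def
    by (simp_all only: R_lin_eq_risk crit_radius_attention hess_eigval_attention)
  have one: "1 \<in> {1..CARD('n)}"
    by (simp add: Suc_leI)
  have top: "sigma j < sigma 1" if "j \<in> {1..CARD('n)}" "j \<noteq> 1" for j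
    using decr[unfolded d_def, OF one that(1)] that by simp
  have top_le: "sigma j \<le> sigma 1" if "j \<in> {1..CARD('n)}" for j
    using top[OF that] by (cases "j = 1") auto
  have below_top: "i \<in> {1..CARD('n)}" "sigma i < sigma 1" if "i \<in> {2..CARD('n)}" for i
    using that top[of i] by auto
  have simple: "inj_on sigma {1..CARD('n)}"
    by (rule inj_onI) (metis decr[unfolded d_def] linorder_neqE_nat less_irrefl)
  show ?thesis
    unfolding R gamma hev d_def
    apply (intro conjI)
    subgoal by (rule crit_risk[OF simple])
    subgoal using is_hessian_risk by blast
    subgoal using hessian_0_neg_def by blast
    subgoal by (rule local_max_0)
    subgoal using hessian_crit_u by blast
    subgoal using pos_def_hessian_crit_u[OF one top] by blast
    subgoal using indefinite_hessian_crit_u[OF below_top(1) one below_top(2)] by blast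
    subgoal using global_min_crit_u[OF one top_le] by blast
    subgoal using strict_saddle_crit_u[OF below_top(1) one below_top(2)] by blast
    done
qed

end
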